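(* Let $n\ge 1$ and consider the nonlinear nonautonomous delay system $$\dot{x}_i(t)=-a_{ii}(t)x_i(t)+\sum_{j\neq i}a_{ij}(t)x_j(t)+\sum_{j=1}^n f_{ij}\big(t,x_j(h_{ij}(t))\big),\qquad i=1,\dots,n,\ t\ge t_0,$$ with initial conditions $x_i(t)=\varphi_i(t)$ for $t\le t_0$, $i=1,\dots,n$, where each $\varphi_i$ is continuous. Assume: (i) $a_{ij}$ and $b_{ij}$ are measurable essentially bounded functions; (ii) for each $i,j$, $f_{ij}(t,\cdot)$ is continuous, $f_{ij}(\cdot,u)$ is measurable and locally essentially bounded, and $|f_{ij}(t,u)|\le b_{ij}(t)|u|$; (iii) the $h_{ij}$ are measurable with $h_{ij}(t)\le t$. Set $A_{ij}=\sup_{t\ge t_0}|a_{ij}(t)|$ and $B_{ij}=\sup_{t\ge t_0}|b_{ij}(t)|$. Suppose there exist numbers $a_i>0$ ($i=1,\dots,n$), $\tau>0$ and $t_0\ge 0$ such that $\inf_{t\ge t_0}a_{ii}(t)\ge a_i$ and $t-h_{ij}(t)\le \tau$ for all $i,j$ and $t\ge t_0$, and suppose that the $n\times n$ matrix $M=(m_{ij})$ with entries $m_{ii}=a_i-B_{ii}$ and $m_{ij}=-A_{ij}-B_{ij}$ for $i\neq j$ is an M-matrix. Then every solution $X(t)=(x_1(t),\dots,x_n(t))^T$ of this system satisfies $\lim_{t\to\infty}X(t)=0$.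
   Context: A solution of the initial value problem is a vector function, locally absolutely continuous for $t\ge t_0$, that satisfies the system almost everywhere for $t\ge t_0$ and equals the initial function for $t\le t_0$. A real square matrix $M=(m_{ij})$ is called an M-matrix if $m_{ij}\le 0$ for $i\ne j$ and one of the following equivalent conditions holds: $M$ has a nonnegative inverse $M^{-1}\ge 0$ (entrywise); or the leading principal minors of $M$ are all positive. *)

theory Defs
  imports "HOL-Analysis.Analysis"
begin

definition abs_continuous_on :: "real \<Rightarrow> real \<Rightarrow> (real \<Rightarrow> 'b::real_normed_vector) \<Rightarrow> bool" where
  "abs_continuous_on a b x \<longleftrightarrow>
     (\<forall>\<epsilon>>0. \<exists>\<delta>>0. \<forall>(m::nat) (s::nat \<Rightarrow> real) (t::nat \<Rightarrow> real).
        (\<forall>k<m. a \<le> s k \<and> s k \<le> t k \<and> t k \<le> b) \<and>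
        (\<forall>k<m. \<forall>l<m. k \<noteq> l \<longrightarrow> t k \<le> s l \<or> t l \<le> s k) \<and>
        (\<Sum>k<m. t k - s k) < \<delta>
        \<longrightarrow> (\<Sum>k<m. norm (x (t k) - x (s k))) < \<epsilon>)"

definition loc_abs_continuous_from :: "real \<Rightarrow> (real \<Rightarrow> 'b::real_normed_vector) \<Rightarrow> bool" where
  "loc_abs_continuous_from t0 x \<longleftrightarrow> (\<forall>T\<ge>t0. abs_continuous_on t0 T x)"

definition is_M_matrix :: "real^'n^'n \<Rightarrow> bool" where
  "is_M_matrix M \<longleftrightarrow> (\<forall>i j. i \<noteq> j \<longrightarrow> M $ i $ j \<le> 0) \<and> invertible M \<and>
     (\<forall>i j. matrix_inv M $ i $ j \<ge> 0)"

definition ess_bounded :: "(real \<Rightarrow> real) \<Rightarrow> bool" where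
  "ess_bounded g \<longleftrightarrow> (\<exists>C. AE t in lebesgue. \<bar>g t\<bar> \<le> C)"

definition loc_ess_bounded :: "(real \<Rightarrow> real) \<Rightarrow> bool" where
  "loc_ess_bounded g \<longleftrightarrow> (\<forall>S T. \<exists>C. AE t in lebesgue. t \<in> {S..T} \<longrightarrow> \<bar>g t\<bar> \<le> C)"

definition is_solution ::
  "('n::finite \<Rightarrow> 'n \<Rightarrow> real \<Rightarrow> real) \<Rightarrow> ('n \<Rightarrow> 'n \<Rightarrow> real \<Rightarrow> real \<Rightarrow> real) \<Rightarrow>
   ('n \<Rightarrow> 'n \<Rightarrow> real \<Rightarrow> real) \<Rightarrow> ('n \<Rightarrow> real \<Rightarrow> real) \<Rightarrow> real \<Rightarrow> (real \<Rightarrow> real^'n) \<Rightarrow> bool" where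
  "is_solution a f h \<phi> t0 x \<longleftrightarrow>
     loc_abs_continuous_from t0 x \<and>
     (AE t in lebesgue. t \<ge> t0 \<longrightarrow>
        (x has_vector_derivative
          (\<chi> i. - a i i t * x t $ i + (\<Sum>j\<in>UNIV - {i}. a i j t * x t $ j)
                 + (\<Sum>j\<in>UNIV. f i j t (x (h i j t) $ j)))) (at t)) \<and>
     (\<forall>t\<le>t0. \<forall>i. x t $ i = \<phi> i t)"

end

theory Submission
  imports Defs
begin

text \<open>A Razumikhin-type comparison argument. Since M is an M-matrix, \<open>\<xi> = M\<^sup>-\<^sup>1 (1,\<dots>,1)\<close>
  is a positive vector with \<open>\<alpha>\<^sub>i \<xi>\<^sub>i - \<Sum>\<^sub>j\<^sub>\<noteq>\<^sub>i A\<^sub>i\<^sub>j \<xi>\<^sub>j - \<Sum>\<^sub>j B\<^sub>i\<^sub>j \<xi>\<^sub>j = 1\<close>.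
  If \<open>|x\<^sub>j| \<le> K \<xi>\<^sub>j\<close> on the last delay window and \<open>|x\<^sub>i(t)| > q K \<xi>\<^sub>i\<close> for a suitable
  \<open>q < 1\<close>, the equation forces \<open>sgn(x\<^sub>i) x\<^sub>i' \<le> -K/2\<close>. Solutions are only absolutely
  continuous, so this is turned into a barrier estimate by a maximum principle for absolutely
  continuous functions, which rests on their Lusin (N) property. The barrier shows first that the
  bound \<open>K \<xi>\<close> persists forever and then that it improves to \<open>q K \<xi>\<close> after a fixed time, so the
  solution decays geometrically.\<close>

section \<open>Absolutely continuous functions\<close>

lemma abs_continuous_onD:
  assumes "abs_continuous_on a b g" "e > 0"
  obtains d where "d > 0"
    "\<And>(m::nat) s t. \<forall>k<m. a \<le> s k \<and> s k \<le> t k \<and> t k \<le> b \<Longrightarrow>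
        \<forall>k<m. \<forall>l<m. k \<noteq> l \<longrightarrow> t k \<le> s l \<or> t l \<le> s k \<Longrightarrow>
        (\<Sum>k<m. t k - s k) < d \<Longrightarrow> (\<Sum>k<m. norm (g (t k) - g (s k))) < e"
proof -
  from assms obtain d where "d > 0" and "\<forall>(m::nat) s t. (\<forall>k<m. a \<le> s k \<and> s k \<le> t k \<and> t k \<le> b) \<and>
        (\<forall>k<m. \<forall>l<m. k \<noteq> l \<longrightarrow> t k \<le> s l \<or> t l \<le> s k) \<and>
        (\<Sum>k<m. t k - s k) < d \<longrightarrow> (\<Sum>k<m. norm (g (t k) - g (s k))) < e"
    unfolding abs_continuous_on_def by blast
  then show thesis by (intro that[of d]) blast+
qed

lemma abs_continuous_onI:
  assumes "\<And>e. e > 0 \<Longrightarrow> \<exists>d>0. \<forall>(m::nat) s t. (\<forall>k<m. a \<le> s k \<and> s k \<le> t k \<and> t k \<le> b) \<longrightarrow>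
        (\<forall>k<m. \<forall>l<m. k \<noteq> l \<longrightarrow> t k \<le> s l \<or> t l \<le> s k) \<longrightarrow>
        (\<Sum>k<m. t k - s k) < d \<longrightarrow> (\<Sum>k<m. norm (g (t k) - g (s k))) < e"
  shows "abs_continuous_on a b g"
  unfolding abs_continuous_on_def
proof (intro allI impI)
  fix e :: real assume "e > 0"
  then obtain d where "d > 0" and "\<forall>(m::nat) s t. (\<forall>k<m. a \<le> s k \<and> s k \<le> t k \<and> t k \<le> b) \<longrightarrow>
        (\<forall>k<m. \<forall>l<m. k \<noteq> l \<longrightarrow> t k \<le> s l \<or> t l \<le> s k) \<longrightarrow>
        (\<Sum>k<m. t k - s k) < d \<longrightarrow> (\<Sum>k<m. norm (g (t k) - g (s k))) < e"
    using assms by blast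
  then show "\<exists>d>0. \<forall>(m::nat) s t. (\<forall>k<m. a \<le> s k \<and> s k \<le> t k \<and> t k \<le> b) \<and>
        (\<forall>k<m. \<forall>l<m. k \<noteq> l \<longrightarrow> t k \<le> s l \<or> t l \<le> s k) \<and>
        (\<Sum>k<m. t k - s k) < d \<longrightarrow> (\<Sum>k<m. norm (g (t k) - g (s k))) < e"
    by blast
qed

lemma abs_continuous_on_finite_familyD:
  assumes "abs_continuous_on a b g" "e > 0"
  obtains d where "d > 0"
    "\<And>(F :: 'i set) s t. finite F \<Longrightarrow> \<forall>C\<in>F. a \<le> s C \<and> s C \<le> t C \<and> t C \<le> b \<Longrightarrow>
        \<forall>C\<in>F. \<forall>C'\<in>F. C \<noteq> C' \<longrightarrow> t C \<le> s C' \<or> t C' \<le> s C \<Longrightarrow>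
        (\<Sum>C\<in>F. t C - s C) < d \<Longrightarrow> (\<Sum>C\<in>F. norm (g (t C) - g (s C))) < e"
proof -
  obtain d where "d > 0" and d: "\<And>(m::nat) s t. \<forall>k<m. a \<le> s k \<and> s k \<le> t k \<and> t k \<le> b \<Longrightarrow>
        \<forall>k<m. \<forall>l<m. k \<noteq> l \<longrightarrow> t k \<le> s l \<or> t l \<le> s k \<Longrightarrow>
        (\<Sum>k<m. t k - s k) < d \<Longrightarrow> (\<Sum>k<m. norm (g (t k) - g (s k))) < e"
    using abs_continuous_onD[OF assms] by blast
  have "(\<Sum>C\<in>F. norm (g (t C) - g (s C))) < e"
    if F: "finite F" "\<forall>C\<in>F. a \<le> s C \<and> s C \<le> t C \<and> t C \<le> b"
      "\<forall>C\<in>F. \<forall>C'\<in>F. C \<noteq> C' \<longrightarrow> t C \<le> s C' \<or> t C' \<le> s C" "(\<Sum>C\<in>F. t C - s C) < d"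
    for F :: "'i set" and s t
  proof -
    obtain \<nu> where \<nu>: "bij_betw \<nu> {..<card F} F"
      using ex_bij_betw_nat_finite[OF F(1)] lessThan_atLeast0 by metis
    have reindex: "(\<Sum>k<card F. w (\<nu> k)) = (\<Sum>C\<in>F. w C)" for w :: "'i \<Rightarrow> real"
      using sum.reindex_bij_betw[OF \<nu>] .
    have "(\<Sum>k<card F. norm (g (t (\<nu> k)) - g (s (\<nu> k)))) < e"
    proof (rule d)
      show "\<forall>k<card F. a \<le> s (\<nu> k) \<and> s (\<nu> k) \<le> t (\<nu> k) \<and> t (\<nu> k) \<le> b"
        using F(2) bij_betwE[OF \<nu>] by blast
      show "\<forall>k<card F. \<forall>l<card F. k \<noteq> l \<longrightarrow> t (\<nu> k) \<le> s (\<nu> l) \<or> t (\<nu> l) \<le> s (\<nu> k)"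
        using F(3) bij_betwE[OF \<nu>] bij_betw_imp_inj_on[OF \<nu>] unfolding inj_on_def by blast
      show "(\<Sum>k<card F. t (\<nu> k) - s (\<nu> k)) < d"
        using F(4) reindex[of "\<lambda>C. t C - s C"] by simp
    qed
    then show ?thesis using reindex[of "\<lambda>C. norm (g (t C) - g (s C))"] by simp
  qed
  with \<open>d > 0\<close> show thesis by (rule that)
qed

lemma abs_continuous_on_imp_continuous_on:
  assumes "abs_continuous_on a b g"
  shows "continuous_on {a..b} g"
  unfolding continuous_on_iff
proof (intro ballI allI impI)
  fix u e assume u: "u \<in> {a..b}" and "(0::real) < e"
  then obtain d where "d > 0" and d: "\<And>(m::nat) s t. \<forall>k<m. a \<le> s k \<and> s k \<le> t k \<and> t k \<le> b \<Longrightarrow>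
        \<forall>k<m. \<forall>l<m. k \<noteq> l \<longrightarrow> t k \<le> s l \<or> t l \<le> s k \<Longrightarrow>
        (\<Sum>k<m. t k - s k) < d \<Longrightarrow> (\<Sum>k<m. norm (g (t k) - g (s k))) < e"
    using abs_continuous_onD[OF assms] by blast
  have "dist (g v) (g u) < e" if v: "v \<in> {a..b}" "dist v u < d" for v
  proof -
    have "(\<Sum>k<Suc 0. norm (g (max u v) - g (min u v))) < e"
      by (rule d) (use u v in \<open>auto simp: dist_real_def\<close>)
    then show ?thesis
      by (cases "u \<le> v") (auto simp: dist_norm norm_minus_commute max_def min_def)
  qed
  with \<open>d > 0\<close> show "\<exists>d>0. \<forall>v\<in>{a..b}. dist v u < d \<longrightarrow> dist (g v) (g u) < e" by blast
qed

lemma abs_continuous_on_subinterval: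
  assumes "abs_continuous_on a b g" "a \<le> c" "d \<le> b"
  shows "abs_continuous_on c d g"
proof (rule abs_continuous_onI)
  fix e :: real assume "e > 0"
  from abs_continuous_onD[OF assms(1) this] obtain \<delta> where "\<delta> > 0"
    and \<delta>: "\<And>(m::nat) s t. \<forall>k<m. a \<le> s k \<and> s k \<le> t k \<and> t k \<le> b \<Longrightarrow>
        \<forall>k<m. \<forall>l<m. k \<noteq> l \<longrightarrow> t k \<le> s l \<or> t l \<le> s k \<Longrightarrow>
        (\<Sum>k<m. t k - s k) < \<delta> \<Longrightarrow> (\<Sum>k<m. norm (g (t k) - g (s k))) < e" by blast
  have "(\<Sum>k<m. norm (g (t k) - g (s k))) < e"
    if "\<forall>k<m. c \<le> s k \<and> s k \<le> t k \<and> t k \<le> d" "\<forall>k<m. \<forall>l<m. k \<noteq> l \<longrightarrow> t k \<le> s l \<or> t l \<le> s k"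
      "(\<Sum>k<m. t k - s k) < \<delta>" for m :: nat and s t
    using that assms(2,3) by (intro \<delta>) force+
  with \<open>\<delta> > 0\<close> show "\<exists>\<delta>>0. \<forall>(m::nat) s t. (\<forall>k<m. c \<le> s k \<and> s k \<le> t k \<and> t k \<le> d) \<longrightarrow>
        (\<forall>k<m. \<forall>l<m. k \<noteq> l \<longrightarrow> t k \<le> s l \<or> t l \<le> s k) \<longrightarrow>
        (\<Sum>k<m. t k - s k) < \<delta> \<longrightarrow> (\<Sum>k<m. norm (g (t k) - g (s k))) < e"
    by blast
qed

lemma abs_continuous_on_add:
  fixes f g :: "real \<Rightarrow> 'b::real_normed_vector"
  assumes "abs_continuous_on a b f" "abs_continuous_on a b g"
  shows "abs_continuous_on a b (\<lambda>t. f t + g t)"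
proof (rule abs_continuous_onI)
  fix e :: real assume "e > 0"
  then have "e / 2 > 0" by simp
  obtain d1 where "d1 > 0"
    and d1: "\<And>(m::nat) s t. \<forall>k<m. a \<le> s k \<and> s k \<le> t k \<and> t k \<le> b \<Longrightarrow>
        \<forall>k<m. \<forall>l<m. k \<noteq> l \<longrightarrow> t k \<le> s l \<or> t l \<le> s k \<Longrightarrow>
        (\<Sum>k<m. t k - s k) < d1 \<Longrightarrow> (\<Sum>k<m. norm (f (t k) - f (s k))) < e / 2"
    by (rule abs_continuous_onD[OF assms(1) \<open>e / 2 > 0\<close>]) blast
  obtain d2 where "d2 > 0"
    and d2: "\<And>(m::nat) s t. \<forall>k<m. a \<le> s k \<and> s k \<le> t k \<and> t k \<le> b \<Longrightarrow>
        \<forall>k<m. \<forall>l<m. k \<noteq> l \<longrightarrow> t k \<le> s l \<or> t l \<le> s k \<Longrightarrow>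
        (\<Sum>k<m. t k - s k) < d2 \<Longrightarrow> (\<Sum>k<m. norm (g (t k) - g (s k))) < e / 2"
    by (rule abs_continuous_onD[OF assms(2) \<open>e / 2 > 0\<close>]) blast
  have "(\<Sum>k<m. norm (f (t k) + g (t k) - (f (s k) + g (s k)))) < e"
    if "\<forall>k<m. a \<le> s k \<and> s k \<le> t k \<and> t k \<le> b" "\<forall>k<m. \<forall>l<m. k \<noteq> l \<longrightarrow> t k \<le> s l \<or> t l \<le> s k"
      "(\<Sum>k<m. t k - s k) < min d1 d2" for m :: nat and s t
  proof -
    have "(\<Sum>k<m. norm (f (t k) + g (t k) - (f (s k) + g (s k))))
        \<le> (\<Sum>k<m. norm (f (t k) - f (s k)) + norm (g (t k) - g (s k)))"
      unfolding add_diff_add by (intro sum_mono norm_triangle_ineq)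
    also have "\<dots> < e / 2 + e / 2"
      unfolding sum.distrib using that by (intro add_strict_mono d1 d2) auto
    finally show ?thesis by simp
  qed
  then show "\<exists>d>0. \<forall>(m::nat) s t. (\<forall>k<m. a \<le> s k \<and> s k \<le> t k \<and> t k \<le> b) \<longrightarrow>
        (\<forall>k<m. \<forall>l<m. k \<noteq> l \<longrightarrow> t k \<le> s l \<or> t l \<le> s k) \<longrightarrow>
        (\<Sum>k<m. t k - s k) < d \<longrightarrow> (\<Sum>k<m. norm (f (t k) + g (t k) - (f (s k) + g (s k)))) < e"
    using \<open>d1 > 0\<close> \<open>d2 > 0\<close> by (intro exI[of _ "min d1 d2"]) auto
qed

lemma abs_continuous_on_linear_image:
  assumes "abs_continuous_on a b g" "bounded_linear L"
  shows "abs_continuous_on a b (\<lambda>t. L (g t))"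
proof (rule abs_continuous_onI)
  fix e :: real assume "e > 0"
  obtain C where C: "C > 0" "\<And>y. norm (L y) \<le> norm y * C"
    using bounded_linear.pos_bounded[OF assms(2)] by blast
  from \<open>e > 0\<close> C(1) have "e / C > 0" by simp
  then obtain d where "d > 0"
    and d: "\<And>(m::nat) s t. \<forall>k<m. a \<le> s k \<and> s k \<le> t k \<and> t k \<le> b \<Longrightarrow>
        \<forall>k<m. \<forall>l<m. k \<noteq> l \<longrightarrow> t k \<le> s l \<or> t l \<le> s k \<Longrightarrow>
        (\<Sum>k<m. t k - s k) < d \<Longrightarrow> (\<Sum>k<m. norm (g (t k) - g (s k))) < e / C"
    by (rule abs_continuous_onD[OF assms(1)]) blast
  have "(\<Sum>k<m. norm (L (g (t k)) - L (g (s k)))) < e"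
    if "\<forall>k<m. a \<le> s k \<and> s k \<le> t k \<and> t k \<le> b" "\<forall>k<m. \<forall>l<m. k \<noteq> l \<longrightarrow> t k \<le> s l \<or> t l \<le> s k"
      "(\<Sum>k<m. t k - s k) < d" for m :: nat and s t
  proof -
    have "(\<Sum>k<m. norm (L (g (t k)) - L (g (s k)))) \<le> (\<Sum>k<m. norm (g (t k) - g (s k))) * C"
      unfolding sum_distrib_right linear_diff[OF bounded_linear.linear[OF assms(2)], symmetric] by (intro sum_mono C(2))
    also have "\<dots> < e / C * C" using d[OF that] C(1) by (rule mult_strict_right_mono)
    finally show ?thesis using C(1) by simp
  qed
  with \<open>d > 0\<close> show "\<exists>d>0. \<forall>(m::nat) s t. (\<forall>k<m. a \<le> s k \<and> s k \<le> t k \<and> t k \<le> b) \<longrightarrow>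
        (\<forall>k<m. \<forall>l<m. k \<noteq> l \<longrightarrow> t k \<le> s l \<or> t l \<le> s k) \<longrightarrow>
        (\<Sum>k<m. t k - s k) < d \<longrightarrow> (\<Sum>k<m. norm (L (g (t k)) - L (g (s k)))) < e" by blast
qed

lemma abs_continuous_on_ident: "abs_continuous_on a b (\<lambda>t::real. t)"
proof (rule abs_continuous_onI)
  fix e :: real assume "e > 0"
  have "(\<Sum>k<m. norm (t k - s k)) = (\<Sum>k<m. t k - s k)" if "\<forall>k<m. s k \<le> t k" for m :: nat and s t
    using that by (intro sum.cong) auto
  with \<open>e > 0\<close> show "\<exists>d>0. \<forall>(m::nat) s t. (\<forall>k<m. a \<le> s k \<and> s k \<le> t k \<and> t k \<le> b) \<longrightarrow>
        (\<forall>k<m. \<forall>l<m. k \<noteq> l \<longrightarrow> t k \<le> s l \<or> t l \<le> s k) \<longrightarrow>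
        (\<Sum>k<m. t k - s k) < d \<longrightarrow> (\<Sum>k<m. norm (t k - s k)) < e" by auto
qed

section \<open>Components of bounded open sets of reals\<close>

lemma component_eq_open_interval:
  fixes U :: "real set"
  assumes "open U" "bounded U" "C \<in> components U"
  shows "C = {Inf C<..<Sup C}"
proof -
  have "C \<noteq> {}" using assms(3) by (rule in_components_nonempty)
  have "open C" using assms(1,3) by (rule open_components)
  have "bounded C" using assms(2,3) in_components_subset bounded_subset by blast
  have "is_interval C" using assms(3) in_components_connected is_interval_connected_1 by blast
  have bdd: "bdd_below C" "bdd_above C"
    using \<open>bounded C\<close> by (auto intro: bounded_imp_bdd_below bounded_imp_bdd_above)
  show ?thesis
  proof
    show "C \<subseteq> {Inf C<..<Sup C}"
    proof
      fix x assume "x \<in> C"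
      with \<open>open C\<close> obtain e where "e > 0" "ball x e \<subseteq> C" by (meson open_contains_ball)
      then have "x - e/2 \<in> C" "x + e/2 \<in> C" by (auto simp: dist_real_def)
      then have "Inf C \<le> x - e/2" "x + e/2 \<le> Sup C" using bdd by (auto intro: cInf_lower cSup_upper)
      with \<open>e > 0\<close> show "x \<in> {Inf C<..<Sup C}" by simp
    qed
    show "{Inf C<..<Sup C} \<subseteq> C"
    proof
      fix y assume y: "y \<in> {Inf C<..<Sup C}"
      then obtain x1 x2 where "x1 \<in> C" "x1 < y" "x2 \<in> C" "y < x2"
        using cInf_less_iff[OF \<open>C \<noteq> {}\<close> bdd(1)] less_cSup_iff[OF \<open>C \<noteq> {}\<close> bdd(2)] by auto
      with \<open>is_interval C\<close> show "y \<in> C" unfolding is_interval_1 by (meson less_imp_le)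
    qed
  qed
qed

lemma components_separated:
  fixes U :: "real set"
  assumes "open U" "bounded U" "C \<in> components U" "C' \<in> components U" "C \<noteq> C'"
  shows "Sup C \<le> Inf C' \<or> Sup C' \<le> Inf C"
proof (rule ccontr)
  have C: "C = {Inf C<..<Sup C}" and C': "C' = {Inf C'<..<Sup C'}"
    using assms component_eq_open_interval by blast+
  then have "Inf C < Sup C" "Inf C' < Sup C'"
    using in_components_nonempty[OF assms(3)] in_components_nonempty[OF assms(4)]
    by (metis greaterThanLessThan_empty_iff not_less)+
  moreover assume "\<not> ?thesis"
  ultimately have "(max (Inf C) (Inf C') + min (Sup C) (Sup C')) / 2 \<in> C \<inter> C'"
    by (subst C, subst C') auto
  with components_nonoverlap[OF assms(3,4)] assms(5) show False by blast
qed

lemma measure_component: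
  fixes U :: "real set"
  assumes "open U" "bounded U" "C \<in> components U"
  shows "measure lebesgue C = Sup C - Inf C"
proof -
  have C: "C = {Inf C<..<Sup C}" using assms by (rule component_eq_open_interval)
  moreover have "C \<noteq> {}" using assms(3) by (rule in_components_nonempty)
  ultimately have "Inf C < Sup C" by (metis greaterThanLessThan_empty_iff not_le)
  have "measure lebesgue C = measure lebesgue {Inf C<..<Sup C}" using C by (rule arg_cong)
  with \<open>Inf C < Sup C\<close> show ?thesis by simp
qed

lemma countable_components:
  fixes U :: "'a::euclidean_space set"
  assumes "open U"
  shows "countable (components U)"
proof (rule countable_disjoint_open_subsets)
  show "open C" if "C \<in> components U" for C using assms that by (rule open_components)
  show "pairwise disjnt (components U)"
    unfolding pairwise_def disjnt_def using components_nonoverlap by blast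
qed

lemma sum_measure_components_le:
  fixes U :: "'a::euclidean_space set"
  assumes "open U" "bounded U" "F \<subseteq> components U" "finite F"
  shows "(\<Sum>C\<in>F. measure lebesgue C) \<le> measure lebesgue U"
proof -
  have open_F: "open C" and sub_F: "C \<subseteq> U" if "C \<in> F" for C
    using that assms(1,3) open_components in_components_subset by blast+
  have lmeas: "C \<in> lmeasurable" if "C \<in> F" for C
    using open_F[OF that] bounded_subset[OF assms(2) sub_F[OF that]] by (rule lmeasurable_open[rotated])
  have "(\<Sum>C\<in>F. measure lebesgue C) = measure lebesgue (\<Union>C\<in>F. C)"
  proof (rule measure_finite_Union[symmetric])
    show "(\<lambda>C. C) ` F \<subseteq> sets lebesgue" using lmeas fmeasurableD by blast
    show "disjoint_family_on (\<lambda>C. C) F"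
      using assms(3) components_nonoverlap unfolding disjoint_family_on_def by blast
    show "emeasure lebesgue C \<noteq> \<infinity>" if "C \<in> F" for C
      using fmeasurableD2[OF lmeas[OF that]] by simp
  qed fact
  also have "\<dots> \<le> measure lebesgue U"
  proof (rule measure_mono_fmeasurable)
    show "(\<Union>C\<in>F. C) \<subseteq> U" using sub_F by blast
    show "(\<Union>C\<in>F. C) \<in> sets lebesgue" using lmeas assms(4) by (intro sets.finite_UN) (auto intro: fmeasurableD)
    show "U \<in> lmeasurable" using assms(2,1) by (rule lmeasurable_open)
  qed
  finally show ?thesis .
qed

lemma negligible_small_open_superset:
  fixes E :: "'a::euclidean_space set"
  assumes "negligible E" "bounded E" "d > 0"
  obtains U where "open U" "bounded U" "E \<subseteq> U" "measure lebesgue U < d"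
proof -
  obtain U0 where U0: "open U0" "E \<subseteq> U0" "U0 - E \<in> lmeasurable" "emeasure lebesgue (U0 - E) < ennreal d"
    using sets_lebesgue_outer_open[OF negligible_imp_sets[OF assms(1)] assms(3)] by blast
  obtain r where "E \<subseteq> ball 0 r" using assms(2) bounded_subset_ballD by blast
  define U where "U = U0 \<inter> ball 0 r"
  have "open U" "bounded U" using U0(1) by (auto simp: U_def)
  have "measure lebesgue U \<le> measure lebesgue ((U0 - E) \<union> E)"
  proof (rule measure_mono_fmeasurable)
    show "U \<subseteq> (U0 - E) \<union> E" by (auto simp: U_def)
    show "U \<in> sets lebesgue" using \<open>bounded U\<close> \<open>open U\<close> by (intro fmeasurableD lmeasurable_open)
    show "(U0 - E) \<union> E \<in> lmeasurable"
      by (rule fmeasurable.Un[OF U0(3) negligible_imp_measurable[OF assms(1)]])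
  qed
  also have "\<dots> \<le> measure lebesgue (U0 - E) + measure lebesgue E"
    using U0 assms(1) by (intro measure_Un_le) (auto intro: negligible_imp_sets fmeasurableD)
  also have "\<dots> < d"
  proof -
    have "measure lebesgue (U0 - E) < d"
      using U0(4) emeasure_eq_measure2[OF U0(3)] ennreal_less_iff[OF measure_nonneg] by metis
    moreover have "measure lebesgue E = 0" using assms(1) by (rule negligible_imp_measure0)
    ultimately show ?thesis by simp
  qed
  finally show thesis
    using \<open>open U\<close> \<open>bounded U\<close> U0(2) \<open>E \<subseteq> ball 0 r\<close> by (intro that[of U]) (auto simp: U_def)
qed

section \<open>The Lusin property and a maximum principle\<close>

lemma abs_continuous_on_components_oscillation:
  fixes g :: "real \<Rightarrow> real"
  assumes "abs_continuous_on a b g" "e > 0"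
  obtains d where "d > 0"
    "\<And>U F p q. open U \<Longrightarrow> bounded U \<Longrightarrow> measure lebesgue U < d \<Longrightarrow> F \<subseteq> components U \<Longrightarrow> finite F \<Longrightarrow>
      (\<And>C. C \<in> F \<Longrightarrow> p C \<in> {max a (Inf C)..min b (Sup C)} \<and> q C \<in> {max a (Inf C)..min b (Sup C)}) \<Longrightarrow>
      (\<Sum>C\<in>F. \<bar>g (q C) - g (p C)\<bar>) < e"
proof -
  obtain d where "d > 0" and d: "\<And>(F :: real set set) s t. finite F \<Longrightarrow>
        \<forall>C\<in>F. a \<le> s C \<and> s C \<le> t C \<and> t C \<le> b \<Longrightarrow>
        \<forall>C\<in>F. \<forall>C'\<in>F. C \<noteq> C' \<longrightarrow> t C \<le> s C' \<or> t C' \<le> s C \<Longrightarrow>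
        (\<Sum>C\<in>F. t C - s C) < d \<Longrightarrow> (\<Sum>C\<in>F. norm (g (t C) - g (s C))) < e"
    by (rule abs_continuous_on_finite_familyD[OF assms]) blast
  have "(\<Sum>C\<in>F. \<bar>g (q C) - g (p C)\<bar>) < e"
    if U: "open U" "bounded U" "measure lebesgue U < d" and F: "F \<subseteq> components U" "finite F"
      and pq: "\<And>C. C \<in> F \<Longrightarrow> p C \<in> {max a (Inf C)..min b (Sup C)} \<and> q C \<in> {max a (Inf C)..min b (Sup C)}"
    for U F p q
  proof -
    define s where "s C = min (p C) (q C)" for C
    define t where "t C = max (p C) (q C)" for C
    have st: "max a (Inf C) \<le> s C \<and> s C \<le> t C \<and> t C \<le> min b (Sup C)" if "C \<in> F" for C
      using pq[OF that] by (auto simp: s_def t_def)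
    have "(\<Sum>C\<in>F. \<bar>g (q C) - g (p C)\<bar>) = (\<Sum>C\<in>F. norm (g (t C) - g (s C)))"
      by (intro sum.cong) (auto simp: s_def t_def min_def max_def abs_minus_commute)
    also have "\<dots> < e"
    proof (rule d[OF F(2)])
      show "\<forall>C\<in>F. a \<le> s C \<and> s C \<le> t C \<and> t C \<le> b" using st by fastforce
      show "\<forall>C\<in>F. \<forall>C'\<in>F. C \<noteq> C' \<longrightarrow> t C \<le> s C' \<or> t C' \<le> s C"
      proof (intro ballI impI)
        fix C C' assume "C \<in> F" "C' \<in> F" "C \<noteq> C'"
        then have "Sup C \<le> Inf C' \<or> Sup C' \<le> Inf C"
          using components_separated[OF U(1,2)] F(1) by blast
        with st[OF \<open>C \<in> F\<close>] st[OF \<open>C' \<in> F\<close>] show "t C \<le> s C' \<or> t C' \<le> s C" by linarith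
      qed
      have "(\<Sum>C\<in>F. t C - s C) \<le> (\<Sum>C\<in>F. measure lebesgue C)"
        using st measure_component[OF U(1,2)] F(1) by (intro sum_mono) fastforce
      also have "\<dots> \<le> measure lebesgue U" using U(1,2) F by (rule sum_measure_components_le)
      finally show "(\<Sum>C\<in>F. t C - s C) < d" using U(3) by linarith
    qed
    finally show ?thesis .
  qed
  with \<open>d > 0\<close> show thesis by (rule that)
qed

lemma abs_continuous_on_negligible_image:
  fixes g :: "real \<Rightarrow> real"
  assumes ac: "abs_continuous_on a b g" and "E \<subseteq> {a..b}" "negligible E"
  shows "negligible (g ` E)"
  unfolding negligible_outer_le
proof (intro allI impI)
  fix e :: real assume "e > 0"
  then obtain d where "d > 0" and osc: "\<And>U F p q. open U \<Longrightarrow> bounded U \<Longrightarrow> measure lebesgue U < d \<Longrightarrow>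
      F \<subseteq> components U \<Longrightarrow> finite F \<Longrightarrow>
      (\<And>C. C \<in> F \<Longrightarrow> p C \<in> {max a (Inf C)..min b (Sup C)} \<and> q C \<in> {max a (Inf C)..min b (Sup C)}) \<Longrightarrow>
      (\<Sum>C\<in>F. \<bar>g (q C) - g (p C)\<bar>) < e"
    using abs_continuous_on_components_oscillation[OF ac] by blast
  obtain U where U: "open U" "bounded U" "E \<subseteq> U" "measure lebesgue U < d"
    using negligible_small_open_superset[OF assms(3) _ \<open>d > 0\<close>] assms(2)
    by (metis bounded_closed_interval bounded_subset)
  \<comment> \<open>Cover g(E) by the ranges of g over the closures of the components of U that meet [a,b].\<close>
  define D where "D = {C \<in> components U. C \<inter> {a..b} \<noteq> {}}"
  define I where "I C = {max a (Inf C) .. min b (Sup C)}" for C :: "real set"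
  have I_ne: "I C \<noteq> {}" if C: "C \<in> D" for C
  proof -
    obtain y where "y \<in> C" "y \<in> {a..b}" using C unfolding D_def by blast
    moreover have "y \<in> {Inf C<..<Sup C}"
      using \<open>y \<in> C\<close> C component_eq_open_interval[OF U(1,2)] unfolding D_def by blast
    ultimately have "y \<in> I C" by (auto simp: I_def)
    then show ?thesis by blast
  qed
  obtain p q where pq: "\<And>C. C \<in> D \<Longrightarrow> p C \<in> I C \<and> q C \<in> I C \<and> (\<forall>y\<in>I C. g (p C) \<le> g y \<and> g y \<le> g (q C))"
  proof -
    have "continuous_on (I C) g" for C
      by (rule continuous_on_subset[OF abs_continuous_on_imp_continuous_on[OF ac]]) (auto simp: I_def)
    then have "\<forall>C\<in>D. \<exists>p\<in>I C. \<exists>q\<in>I C. \<forall>y\<in>I C. g p \<le> g y \<and> g y \<le> g q"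
      using continuous_attains_inf[OF _ I_ne] continuous_attains_sup[OF _ I_ne] by (metis I_def compact_Icc)
    then show thesis using that by metis
  qed
  have cover: "g ` E \<subseteq> (\<Union>C\<in>D. {g (p C)..g (q C)})"
  proof
    fix z assume "z \<in> g ` E"
    then obtain y where y: "y \<in> E" "z = g y" by blast
    define C where "C = connected_component_set U y"
    have "C \<in> components U" "y \<in> C" using y U(3) by (auto simp: C_def components_iff)
    moreover from this have "y \<in> {Inf C<..<Sup C}" using component_eq_open_interval[OF U(1,2)] by blast
    ultimately have "C \<in> D" "y \<in> I C" using y assms(2) by (auto simp: D_def I_def)
    then have "g y \<in> {g (p C)..g (q C)}" using pq by simp
    with \<open>C \<in> D\<close> y(2) show "z \<in> (\<Union>C\<in>D. {g (p C)..g (q C)})" by blast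
  qed
  have "countable D"
    using countable_subset[OF _ countable_components[OF U(1)]] by (auto simp: D_def)
  have bound: "measure lebesgue (\<Union>C\<in>F. {g (p C)..g (q C)}) \<le> e" if F: "F \<subseteq> D" "finite F" for F
  proof -
    have "measure lebesgue (\<Union>C\<in>F. {g (p C)..g (q C)}) \<le> (\<Sum>C\<in>F. measure lebesgue {g (p C)..g (q C)})"
      using F(2) by (intro measure_UNION_le) auto
    also have "\<dots> = (\<Sum>C\<in>F. \<bar>g (q C) - g (p C)\<bar>)"
      using pq F(1) by (intro sum.cong) auto
    also have "\<dots> < e"
      using F pq U(1,2,4) unfolding D_def I_def by (intro osc) auto
    finally show ?thesis by simp
  qed
  have "\<And>C. C \<in> D \<Longrightarrow> {g (p C)..g (q C)} \<in> lmeasurable" by simp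
  from fmeasurable_UN_bound[OF \<open>countable D\<close> this bound] measure_UN_bound[OF \<open>countable D\<close> this bound] cover
  show "\<exists>T. g ` E \<subseteq> T \<and> T \<in> lmeasurable \<and> measure lebesgue T \<le> e" by blast
qed

lemma abs_continuous_on_le_max:
  fixes g :: "real \<Rightarrow> real"
  assumes "a \<le> b" and ac: "abs_continuous_on a b g" and "negligible E"
    and neg_deriv: "\<And>u. u \<in> {a..b} - E \<Longrightarrow> c < g u \<Longrightarrow> \<exists>d<0. (g has_real_derivative d) (at u)"
  shows "g b \<le> max c (g a)"
proof (rule ccontr)
  assume "\<not> g b \<le> max c (g a)"
  have cont: "continuous_on {a..b} g" using ac by (rule abs_continuous_on_imp_continuous_on)
  \<comment> \<open>By the Lusin property, some level strictly between max c (g a) and g b is not attained on E.\<close>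
  have "negligible (g ` (E \<inter> {a..b}))"
    using ac by (rule abs_continuous_on_negligible_image) (auto intro: negligible_subset[OF \<open>negligible E\<close>])
  moreover have "\<not> negligible {max c (g a)<..<g b}"
    using \<open>\<not> g b \<le> max c (g a)\<close> by (intro open_not_negligible) auto
  ultimately obtain y where y: "max c (g a) < y" "y < g b" "y \<notin> g ` (E \<inter> {a..b})"
    by (metis greaterThanLessThan_iff negligible_subset subsetI)
  define S where "S = {a..b} \<inter> g -` {..y}"
  have "closed S" unfolding S_def using cont by (rule continuous_closed_preimage) auto
  moreover have "a \<in> S" "bdd_above S" using y \<open>a \<le> b\<close> by (auto simp: S_def bdd_above_def)
  ultimately have "Sup S \<in> S" by (intro closed_contains_Sup) auto
  define s where "s = Sup S"
  have above: "y < g u" if "u \<in> {a..b}" "s < u" for u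
    using that cSup_upper[OF _ \<open>bdd_above S\<close>, of u] by (force simp: S_def s_def)
  have s: "a \<le> s" "s \<le> b" "g s \<le> y" using \<open>Sup S \<in> S\<close> by (auto simp: S_def s_def)
  then have "s < b" using y(2) by (cases "s = b") auto
  have "g s = y"
  proof -
    obtain u where "s \<le> u" "u \<le> b" "g u = y"
      using IVT'[of g s y b] s y(2) \<open>s < b\<close> continuous_on_subset[OF cont] by fastforce
    with above s show ?thesis by (cases "u = s") force+
  qed
  then obtain d where "d < 0" "(g has_real_derivative d) (at s)"
    using neg_deriv[of s] s y by force
  then obtain \<delta> where "\<delta> > 0" and dec: "\<And>h. h > 0 \<Longrightarrow> h < \<delta> \<Longrightarrow> g (s + h) < g s"
    using DERIV_neg_dec_right by blast
  define h where "h = min (\<delta> / 2) (b - s)"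
  have "h > 0" "h < \<delta>" "s + h \<le> b" using \<open>\<delta> > 0\<close> \<open>s < b\<close> by (auto simp: h_def)
  with dec[of h] above[of "s + h"] s \<open>g s = y\<close> show False by simp
qed

section \<open>The comparison system\<close>

lemma is_M_matrix_positive_vector:
  fixes M :: "real^'n^'n"
  assumes "is_M_matrix M"
  obtains \<xi> where "M *v \<xi> = (\<chi> i. 1)" "\<And>i. 0 < \<xi> $ i"
proof -
  have "invertible M" and inv_nonneg: "\<And>i j. 0 \<le> matrix_inv M $ i $ j"
    and off_diag: "\<And>i j. i \<noteq> j \<Longrightarrow> M $ i $ j \<le> 0"
    using assms unfolding is_M_matrix_def by auto
  have "M ** matrix_inv M = mat 1"
    using someI_ex[OF \<open>invertible M\<close>[unfolded invertible_def]] unfolding matrix_inv_def by blast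
  define \<xi> where "\<xi> = matrix_inv M *v (\<chi> i. 1)"
  have M_\<xi>: "M *v \<xi> = (\<chi> i. 1)"
    by (simp add: \<xi>_def matrix_vector_mul_assoc \<open>M ** matrix_inv M = mat 1\<close>)
  have \<xi>_nonneg: "0 \<le> \<xi> $ j" for j
    unfolding \<xi>_def matrix_vector_mult_def using inv_nonneg by (simp add: sum_nonneg)
  have "0 < \<xi> $ i" for i
  proof -
    have "1 = (M *v \<xi>) $ i" using M_\<xi> by simp
    also have "\<dots> = M $ i $ i * \<xi> $ i + (\<Sum>j\<in>UNIV - {i}. M $ i $ j * \<xi> $ j)"
      unfolding matrix_vector_mult_def by (simp add: sum.remove)
    also have "\<dots> \<le> M $ i $ i * \<xi> $ i"
      using off_diag \<xi>_nonneg by (auto intro!: sum_nonpos mult_nonpos_nonneg)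
    finally have "\<xi> $ i \<noteq> 0" by auto
    with \<xi>_nonneg[of i] show ?thesis by simp
  qed
  with M_\<xi> show thesis by (rule that)
qed

lemma comparison_matrix_row:
  fixes A B :: "'n::finite \<Rightarrow> 'n \<Rightarrow> real" and \<xi> :: "real^'n"
  assumes "(\<chi> i j. if i = j then \<alpha> i - B i i else - A i j - B i j) *v \<xi> = (\<chi> i. 1)"
  shows "(\<Sum>j\<in>UNIV - {i}. A i j * \<xi> $ j) + (\<Sum>j\<in>UNIV. B i j * \<xi> $ j) = \<alpha> i * \<xi> $ i - 1"
proof -
  define M :: "real^'n^'n" where "M = (\<chi> i j. if i = j then \<alpha> i - B i i else - A i j - B i j)"
  have "1 = (M *v \<xi>) $ i" using assms by (simp add: M_def)
  also have "\<dots> = M $ i $ i * \<xi> $ i + (\<Sum>j\<in>UNIV - {i}. M $ i $ j * \<xi> $ j)"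
    by (simp add: matrix_vector_mult_def sum.remove)
  also have "\<dots> = (\<alpha> i - B i i) * \<xi> $ i + (\<Sum>j\<in>UNIV - {i}. (- A i j - B i j) * \<xi> $ j)"
    by (simp add: M_def)
  also have "\<dots> = \<alpha> i * \<xi> $ i - (\<Sum>j\<in>UNIV - {i}. A i j * \<xi> $ j) - (\<Sum>j\<in>UNIV. B i j * \<xi> $ j)"
    by (simp add: sum.remove[of UNIV i "\<lambda>j. B i j * \<xi> $ j"] algebra_simps sum_subtractf sum_negf)
  finally show ?thesis by simp
qed

lemma contraction_factor_exists:
  fixes w :: "'i::finite \<Rightarrow> real"
  obtains q where "0 < q" "q < 1" "\<And>i. w i * (1 - q) \<le> 1 / 2"
proof
  define \<Gamma> where "\<Gamma> = max 1 (Max (range w))"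
  have "w i \<le> \<Gamma>" "1 \<le> \<Gamma>" for i unfolding \<Gamma>_def by (auto intro: max.coboundedI2)
  then show "0 < 1 - 1 / (2 * \<Gamma>)" "1 - 1 / (2 * \<Gamma>) < 1" "w i * (1 - (1 - 1 / (2 * \<Gamma>))) \<le> 1 / 2" for i
    by (auto simp: field_simps)
qed

lemma delay_rhs_sign_bound:
  fixes a A B F y z \<xi> :: "'n::finite \<Rightarrow> real"
  assumes "0 \<le> K" "0 \<le> q" "\<And>j. 0 \<le> \<xi> j" "\<And>j. 0 \<le> B j"
    and y_bound: "\<And>j. \<bar>y j\<bar> \<le> K * \<xi> j" and z_bound: "\<And>j. \<bar>z j\<bar> \<le> K * \<xi> j"
    and a_bound: "\<And>j. j \<noteq> i \<Longrightarrow> \<bar>a j\<bar> \<le> A j" and "0 \<le> \<alpha>" "\<alpha> \<le> a i"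
    and F_bound: "\<And>j. \<bar>F j\<bar> \<le> B j * \<bar>z j\<bar>"
    and row: "(\<Sum>j\<in>UNIV - {i}. A j * \<xi> j) + (\<Sum>j\<in>UNIV. B j * \<xi> j) \<le> \<alpha> * \<xi> i - 1"
    and "\<alpha> * \<xi> i * (1 - q) \<le> 1 / 2"
    and large: "q * K * \<xi> i < \<bar>y i\<bar>"
  shows "sgn (y i) * (- a i * y i + (\<Sum>j\<in>UNIV - {i}. a j * y j) + (\<Sum>j\<in>UNIV. F j)) \<le> - K / 2"
proof -
  define S1 where "S1 = (\<Sum>j\<in>UNIV - {i}. a j * y j)"
  define S2 where "S2 = (\<Sum>j\<in>UNIV. F j)"
  have "0 \<le> q * K * \<xi> i" using assms(1-3) by simp
  with large have "y i \<noteq> 0" by auto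
  then have sgn_y: "sgn (y i) * y i = \<bar>y i\<bar>" "\<bar>sgn (y i)\<bar> = 1" by (auto simp: sgn_mult_self_eq abs_sgn)
  have sgn_le: "sgn (y i) * S \<le> \<bar>S\<bar>" for S
    using sgn_y(2) by (metis abs_ge_self abs_mult mult_1)
  have "\<bar>S1\<bar> \<le> (\<Sum>j\<in>UNIV - {i}. \<bar>a j\<bar> * \<bar>y j\<bar>)"
    unfolding S1_def abs_mult[symmetric] by (rule sum_abs)
  also have "\<dots> \<le> (\<Sum>j\<in>UNIV - {i}. A j * (K * \<xi> j))"
    using a_bound y_bound by (intro sum_mono mult_mono) (auto intro: order_trans[OF abs_ge_zero])
  finally have S1_bound: "\<bar>S1\<bar> \<le> (\<Sum>j\<in>UNIV - {i}. A j * (K * \<xi> j))" .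
  have "\<bar>S2\<bar> \<le> (\<Sum>j\<in>UNIV. \<bar>F j\<bar>)" unfolding S2_def by (rule sum_abs)
  also have "\<dots> \<le> (\<Sum>j\<in>UNIV. B j * (K * \<xi> j))"
    using F_bound z_bound \<open>\<And>j. 0 \<le> B j\<close> by (intro sum_mono) (meson mult_left_mono order_trans)
  finally have S2_bound: "\<bar>S2\<bar> \<le> (\<Sum>j\<in>UNIV. B j * (K * \<xi> j))" .
  have "sgn (y i) * (- a i * y i + S1 + S2) = - a i * \<bar>y i\<bar> + sgn (y i) * S1 + sgn (y i) * S2"
    using sgn_y(1) by (simp add: algebra_simps)
  also have "\<dots> \<le> - \<alpha> * \<bar>y i\<bar> + \<bar>S1\<bar> + \<bar>S2\<bar>"
    using \<open>\<alpha> \<le> a i\<close> sgn_le by (intro add_mono) (auto intro: mult_right_mono)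
  also have "\<dots> \<le> - \<alpha> * (q * K * \<xi> i) + K * (\<alpha> * \<xi> i - 1)"
  proof -
    have "(\<Sum>j\<in>UNIV - {i}. A j * (K * \<xi> j)) + (\<Sum>j\<in>UNIV. B j * (K * \<xi> j))
        = K * ((\<Sum>j\<in>UNIV - {i}. A j * \<xi> j) + (\<Sum>j\<in>UNIV. B j * \<xi> j))"
      by (simp add: sum_distrib_left algebra_simps)
    also have "\<dots> \<le> K * (\<alpha> * \<xi> i - 1)" using row \<open>0 \<le> K\<close> by (rule mult_left_mono)
    finally show ?thesis
      using S1_bound S2_bound mult_left_mono[OF less_imp_le[OF large] \<open>0 \<le> \<alpha>\<close>] by linarith
  qed
  also have "\<dots> = K * (\<alpha> * \<xi> i * (1 - q)) - K" by (simp add: algebra_simps)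
  also have "\<dots> \<le> K / 2 - K"
    using mult_left_mono[OF \<open>\<alpha> * \<xi> i * (1 - q) \<le> 1 / 2\<close> \<open>0 \<le> K\<close>] by simp
  finally show ?thesis by (simp add: S1_def S2_def)
qed

section \<open>Razumikhin-type decay\<close>

lemma bound_continuation:
  fixes g :: "'i::finite \<Rightarrow> real \<Rightarrow> real" and B :: "'i \<Rightarrow> real"
  assumes cont: "\<And>j T. continuous_on {a..T} (g j)"
    and start: "\<And>j. g j a < B j"
    and step: "\<And>T j. a \<le> T \<Longrightarrow> (\<And>v k. v \<in> {a..T} \<Longrightarrow> g k v \<le> B k) \<Longrightarrow> g j T < B j"
    and "a \<le> t"
  shows "g j t \<le> B j"
proof (rule ccontr)
  assume "\<not> g j t \<le> B j"
  define Z where "Z = (\<Union>k. {a..t} \<inter> g k -` {B k..})"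
  have "closed Z" unfolding Z_def
    using cont by (intro closed_UN ballI continuous_closed_preimage) auto
  moreover have "t \<in> Z" "bdd_below Z"
    using \<open>\<not> g j t \<le> B j\<close> \<open>a \<le> t\<close> by (auto simp: Z_def bdd_below_def intro!: exI[of _ j])
  ultimately have "Inf Z \<in> Z" by (intro closed_contains_Inf) auto
  define T where "T = Inf Z"
  have "a \<le> T" "T \<le> t" using \<open>Inf Z \<in> Z\<close> by (auto simp: Z_def T_def)
  have before: "g k v < B k" if "v \<in> {a..<T}" for k v
  proof (rule ccontr)
    assume "\<not> g k v < B k"
    with that \<open>T \<le> t\<close> have "v \<in> Z" by (auto simp: Z_def not_less)
    then have "T \<le> v" unfolding T_def using \<open>bdd_below Z\<close> by (rule cInf_lower)
    with that show False by simp
  qed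
  have at_T: "g k T \<le> B k" for k
  proof (cases "T = a")
    case True
    with start show ?thesis by (simp add: less_imp_le)
  next
    case False
    have "closed ({a..T} \<inter> g k -` {..B k})"
      using cont by (intro continuous_closed_preimage) auto
    moreover have "{a..<T} \<subseteq> {a..T} \<inter> g k -` {..B k}"
      using before by (force intro: less_imp_le)
    ultimately have "closure {a..<T} \<subseteq> {a..T} \<inter> g k -` {..B k}"
      by (rule closure_minimal[rotated])
    with False \<open>a \<le> T\<close> show ?thesis by (auto simp: closure_atLeastLessThan)
  qed
  have "g k T < B k" for k
  proof (rule step[OF \<open>a \<le> T\<close>])
    fix v i assume "v \<in> {a..T}"
    with before at_T show "g i v \<le> B i" by (cases "v = T") (auto intro: less_imp_le)
  qed
  with \<open>Inf Z \<in> Z\<close> show False by (auto simp: Z_def T_def not_less[symmetric])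
qed

text \<open>While the solution stays within \<open>K \<xi>\<close> on the delay window, every component exceeding the
  fraction q of its bound is driven towards 0 at rate at least \<open>c K\<close>; N is the null set where x
  need not be differentiable.\<close>

locale razumikhin_decay =
  fixes x :: "real \<Rightarrow> real^'n::finite" and \<xi> :: "real^'n" and N :: "real set" and t0 \<tau> q c :: real
  assumes abs_cont: "loc_abs_continuous_from t0 x"
    and initial_bounded: "bounded (x ` {t0 - \<tau>..t0})"
    and negligible_N: "negligible N"
    and tau_pos: "0 < \<tau>" and q_pos: "0 < q" and q_less_1: "q < 1" and c_pos: "0 < c"
    and xi_pos: "\<And>j. 0 < \<xi> $ j"
    and decay: "\<And>u K i. t0 \<le> u \<Longrightarrow> u \<notin> N \<Longrightarrow> 0 \<le> K \<Longrightarrow>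
      (\<And>v j. v \<in> {u - \<tau>..u} \<Longrightarrow> \<bar>x v $ j\<bar> \<le> K * \<xi> $ j) \<Longrightarrow> q * K * \<xi> $ i < \<bar>x u $ i\<bar> \<Longrightarrow>
      \<exists>D. ((\<lambda>v. x v $ i) has_real_derivative D) (at u) \<and> sgn (x u $ i) * D \<le> - c * K"
begin

lemma abs_continuous_component_affine:
  assumes "t0 \<le> s" "s \<le> t"
  shows "abs_continuous_on s t (\<lambda>v. \<sigma> * x v $ i + \<rho> * v)"
proof -
  have "abs_continuous_on t0 t x"
    using abs_cont assms unfolding loc_abs_continuous_from_def by auto
  moreover have "bounded_linear (\<lambda>y. \<sigma> * y $ i)"
    by (rule bounded_linear_compose[OF bounded_linear_mult_right bounded_linear_vec_nth])
  ultimately have "abs_continuous_on t0 t (\<lambda>v. \<sigma> * x v $ i)"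
    by (rule abs_continuous_on_linear_image)
  moreover have "abs_continuous_on t0 t (\<lambda>v. \<rho> * v)"
    by (rule abs_continuous_on_linear_image[OF abs_continuous_on_ident bounded_linear_mult_right])
  ultimately have "abs_continuous_on t0 t (\<lambda>v. \<sigma> * x v $ i + \<rho> * v)"
    by (rule abs_continuous_on_add)
  then show ?thesis using assms(1) by (rule abs_continuous_on_subinterval) simp
qed

lemma continuous_on_abs_component: "continuous_on {t0..t} (\<lambda>v. \<bar>x v $ j\<bar>)"
proof (cases "t0 \<le> t")
  case True
  show ?thesis
    using abs_continuous_on_imp_continuous_on[OF abs_continuous_component_affine[OF order_refl True, of 1 j 0]]
    by (intro continuous_on_rabs) simp
qed simp

lemma abs_component_barrier:
  assumes "t0 \<le> s" "s \<le> t" "0 < K"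
    and window: "\<And>v j. v \<in> {s - \<tau>..t} \<Longrightarrow> \<bar>x v $ j\<bar> \<le> K * \<xi> $ j"
  shows "\<bar>x t $ i\<bar> \<le> max (q * K * \<xi> $ i) (\<bar>x s $ i\<bar> - c * K / 2 * (t - s))"
proof -
  have "\<sigma> * x t $ i \<le> max (q * K * \<xi> $ i) (\<bar>x s $ i\<bar> - c * K / 2 * (t - s))" if "\<sigma> = 1 \<or> \<sigma> = -1" for \<sigma>
  proof -
    \<comment> \<open>Tilting by half the decay rate keeps the derivative negative above the level q * K * \<xi> $ i.\<close>
    define G where "G v = \<sigma> * x v $ i + c * K / 2 * v" for v
    have "G t \<le> max (q * K * \<xi> $ i + c * K / 2 * t) (G s)"
    proof (rule abs_continuous_on_le_max[OF \<open>s \<le> t\<close> _ negligible_N])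
      show "abs_continuous_on s t G"
        unfolding G_def using assms(1,2) by (rule abs_continuous_component_affine)
      fix u assume u: "u \<in> {s..t} - N" "q * K * \<xi> $ i + c * K / 2 * t < G u"
      have "c * K / 2 * u \<le> c * K / 2 * t" using u(1) c_pos \<open>0 < K\<close> by auto
      with u(2) have large: "q * K * \<xi> $ i < \<sigma> * x u $ i" by (simp add: G_def)
      moreover have "0 \<le> q * K * \<xi> $ i" using less_imp_le[OF q_pos] \<open>0 < K\<close> xi_pos[of i] by simp
      ultimately have "q * K * \<xi> $ i < \<bar>x u $ i\<bar>" "sgn (x u $ i) = \<sigma>"
        using that by (auto simp: sgn_if)
      moreover have "\<bar>x v $ j\<bar> \<le> K * \<xi> $ j" if "v \<in> {u - \<tau>..u}" for v j
        using that u(1) by (intro window) auto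
      ultimately obtain D where "((\<lambda>v. x v $ i) has_real_derivative D) (at u)" "\<sigma> * D \<le> - c * K"
        using decay[of u K i] u(1) assms(1) \<open>0 < K\<close> by auto
      then have "(G has_real_derivative \<sigma> * D + c * K / 2) (at u)"
        unfolding G_def by (auto intro!: derivative_eq_intros)
      moreover have "\<sigma> * D + c * K / 2 < 0"
        using \<open>\<sigma> * D \<le> - c * K\<close> mult_pos_pos[OF c_pos \<open>0 < K\<close>] by linarith
      ultimately show "\<exists>d<0. (G has_real_derivative d) (at u)" by blast
    qed
    moreover have "\<sigma> * x s $ i \<le> \<bar>x s $ i\<bar>" using that by auto
    ultimately show ?thesis by (simp add: G_def right_diff_distrib max_def split: if_splits)
  qed
  from this[of 1] this[of "-1"] show ?thesis by (simp add: abs_if)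
qed

lemma uniformly_bounded:
  obtains K where "0 < K" "\<And>v j. t0 - \<tau> \<le> v \<Longrightarrow> \<bar>x v $ j\<bar> \<le> K * \<xi> $ j"
proof -
  obtain R where R: "\<forall>v\<in>{t0 - \<tau>..t0}. norm (x v) \<le> R"
    using initial_bounded unfolding bounded_iff by blast
  define m where "m = Min (range (\<lambda>j. \<xi> $ j))"
  have "0 < m" "\<And>j. m \<le> \<xi> $ j"
    using xi_pos by (auto simp: m_def)
  define K where "K = (\<bar>R\<bar> + 1) / m"
  have "0 < K" using \<open>0 < m\<close> by (simp add: K_def)
  have initial: "\<bar>x v $ j\<bar> < K * \<xi> $ j" if "v \<in> {t0 - \<tau>..t0}" for v j
  proof -
    have "\<bar>x v $ j\<bar> \<le> \<bar>R\<bar>" using R[rule_format, OF that] component_le_norm_cart[of "x v" j] by linarith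
    also have "\<dots> < K * m" using \<open>0 < m\<close> by (simp add: K_def)
    also have "\<dots> \<le> K * \<xi> $ j" using \<open>0 < K\<close> \<open>m \<le> \<xi> $ j\<close> by simp
    finally show ?thesis .
  qed
  have "\<bar>x t $ j\<bar> \<le> K * \<xi> $ j" if "t0 \<le> t" for t j
  proof (rule bound_continuation[where g = "\<lambda>j v. \<bar>x v $ j\<bar>", OF continuous_on_abs_component _ _ that])
    show "\<bar>x t0 $ j\<bar> < K * \<xi> $ j" for j using initial tau_pos by simp
    fix T j assume "t0 \<le> T" and bound: "\<And>v k. v \<in> {t0..T} \<Longrightarrow> \<bar>x v $ k\<bar> \<le> K * \<xi> $ k"
    have "\<bar>x v $ k\<bar> \<le> K * \<xi> $ k" if "v \<in> {t0 - \<tau>..T}" for v k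
      using that bound initial[of v k] by (cases "v \<le> t0") auto
    then have "\<bar>x T $ j\<bar> \<le> max (q * K * \<xi> $ j) (\<bar>x t0 $ j\<bar> - c * K / 2 * (T - t0))"
      using \<open>t0 \<le> T\<close> \<open>0 < K\<close> by (intro abs_component_barrier) auto
    moreover have "q * K * \<xi> $ j < K * \<xi> $ j"
      using q_less_1 \<open>0 < K\<close> xi_pos[of j] by simp
    moreover have "\<bar>x t0 $ j\<bar> - c * K / 2 * (T - t0) < K * \<xi> $ j"
    proof -
      have "0 \<le> c * K / 2 * (T - t0)" using c_pos \<open>0 < K\<close> \<open>t0 \<le> T\<close> by simp
      with initial[of t0 j] tau_pos show ?thesis by simp
    qed
    ultimately show "\<bar>x T $ j\<bar> < K * \<xi> $ j" by linarith
  qed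
  with initial have "\<bar>x v $ j\<bar> \<le> K * \<xi> $ j" if "t0 - \<tau> \<le> v" for v j
    using that by (cases "v \<le> t0") (auto intro: less_imp_le)
  with \<open>0 < K\<close> show thesis by (rule that)
qed

lemma bound_contracts:
  assumes "t0 \<le> s" "0 < K" and bound: "\<And>v j. s - \<tau> \<le> v \<Longrightarrow> \<bar>x v $ j\<bar> \<le> K * \<xi> $ j"
    and "s + 2 * norm \<xi> / c \<le> t"
  shows "\<bar>x t $ j\<bar> \<le> q * K * \<xi> $ j"
proof -
  have "0 \<le> 2 * norm \<xi> / c" using c_pos by simp
  with assms(4) have "s \<le> t" by linarith
  then have "\<bar>x t $ j\<bar> \<le> max (q * K * \<xi> $ j) (\<bar>x s $ j\<bar> - c * K / 2 * (t - s))"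
    using assms(1,2) bound by (intro abs_component_barrier) auto
  moreover have "\<bar>x s $ j\<bar> \<le> K * norm \<xi>"
  proof -
    have "\<bar>x s $ j\<bar> \<le> K * \<xi> $ j" using bound tau_pos by simp
    also have "\<dots> \<le> K * norm \<xi>"
      using component_le_norm_cart[of \<xi> j] xi_pos[of j] \<open>0 < K\<close> by (simp add: mult_left_mono)
    finally show ?thesis .
  qed
  moreover have "K * norm \<xi> \<le> c * K / 2 * (t - s)"
    using mult_left_mono[of "2 * norm \<xi> / c" "t - s" "c * K / 2"] assms(4) c_pos \<open>0 < K\<close>
    by (simp add: field_simps)
  moreover have "0 \<le> q * K * \<xi> $ j" using less_imp_le[OF q_pos] \<open>0 < K\<close> xi_pos[of j] by simp
  ultimately show ?thesis by linarith
qed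

lemma geometric_decay:
  obtains K where "0 < K"
    "\<And>n v j. t0 - \<tau> + real n * (2 * norm \<xi> / c + \<tau>) \<le> v \<Longrightarrow> \<bar>x v $ j\<bar> \<le> q ^ n * K * \<xi> $ j"
proof -
  obtain K where "0 < K" and K: "\<And>v j. t0 - \<tau> \<le> v \<Longrightarrow> \<bar>x v $ j\<bar> \<le> K * \<xi> $ j"
    using uniformly_bounded by blast
  have "\<bar>x v $ j\<bar> \<le> q ^ n * K * \<xi> $ j" if "t0 - \<tau> + real n * (2 * norm \<xi> / c + \<tau>) \<le> v" for n v j
    using that
  proof (induction n arbitrary: v j)
    case 0
    then show ?case using K by simp
  next
    case (Suc n)
    define s where "s = t0 + real n * (2 * norm \<xi> / c + \<tau>)"
    have "0 \<le> 2 * norm \<xi> / c + \<tau>" using c_pos tau_pos by simp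
    then have "t0 \<le> s" by (simp add: s_def)
    moreover have "s + 2 * norm \<xi> / c \<le> v" using Suc.prems by (simp add: s_def algebra_simps add_divide_distrib)
    moreover have "0 < q ^ n * K" using q_pos \<open>0 < K\<close> by simp
    ultimately have "\<bar>x v $ j\<bar> \<le> q * (q ^ n * K) * \<xi> $ j"
      using Suc.IH by (intro bound_contracts) (auto simp: s_def)
    then show ?case by (simp add: mult.assoc)
  qed
  with \<open>0 < K\<close> show thesis by (rule that)
qed

theorem tendsto_zero: "(x \<longlongrightarrow> 0) at_top"
proof -
  obtain K where "0 < K" and decay_n:
    "\<And>n v j. t0 - \<tau> + real n * (2 * norm \<xi> / c + \<tau>) \<le> v \<Longrightarrow> \<bar>x v $ j\<bar> \<le> q ^ n * K * \<xi> $ j"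
    using geometric_decay by blast
  have norm_bound: "norm (x v) \<le> q ^ n * K * norm \<xi>"
    if "t0 - \<tau> + real n * (2 * norm \<xi> / c + \<tau>) \<le> v" for n v
  proof -
    have "norm (x v) \<le> norm ((q ^ n * K) *\<^sub>R \<xi>)"
      using decay_n[OF that] q_pos \<open>0 < K\<close> xi_pos
      by (intro norm_le_componentwise_cart) (simp add: abs_of_pos)
    then show ?thesis using q_pos \<open>0 < K\<close> by simp
  qed
  have "(\<lambda>n. q ^ n * K * norm \<xi>) \<longlonglongrightarrow> 0"
    using q_pos q_less_1 by (intro tendsto_mult_left_zero LIMSEQ_power_zero) simp
  show ?thesis
    unfolding tendsto_iff eventually_at_top_linorder
  proof (intro allI impI)
    fix e :: real assume "0 < e"
    with \<open>(\<lambda>n. q ^ n * K * norm \<xi>) \<longlonglongrightarrow> 0\<close> obtain n where "q ^ n * K * norm \<xi> < e"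
      by (metis (no_types, lifting) eventually_sequentially order.refl order_tendstoD(2))
    with norm_bound show "\<exists>N. \<forall>v\<ge>N. dist (x v) 0 < e"
      by (intro exI[of _ "t0 - \<tau> + real n * (2 * norm \<xi> / c + \<tau>)"]) (auto intro: le_less_trans)
  qed
qed

end

lemma delay_system_razumikhin_decay:
  fixes a :: "'n::finite \<Rightarrow> 'n \<Rightarrow> real \<Rightarrow> real" and A B :: "'n \<Rightarrow> 'n \<Rightarrow> real" and \<xi> :: "real^'n"
  assumes sol: "is_solution a f h \<phi> t0 x"
    and phi_cont: "\<And>i. continuous_on {..t0} (\<phi> i)"
    and a_bound: "\<And>i j t. t0 \<le> t \<Longrightarrow> \<bar>a i j t\<bar> \<le> A i j"
    and a_diag: "\<And>i t. t0 \<le> t \<Longrightarrow> \<alpha> i \<le> a i i t" and alpha_nonneg: "\<And>i. 0 \<le> \<alpha> i"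
    and f_bound: "\<And>i j t u. t0 \<le> t \<Longrightarrow> \<bar>f i j t u\<bar> \<le> B i j * \<bar>u\<bar>"
    and B_nonneg: "\<And>i j. 0 \<le> B i j"
    and delay: "\<And>i j t. t0 \<le> t \<Longrightarrow> t - \<tau> \<le> h i j t \<and> h i j t \<le> t" and "0 < \<tau>"
    and xi_pos: "\<And>j. 0 < \<xi> $ j"
    and row: "\<And>i. (\<Sum>j\<in>UNIV - {i}. A i j * \<xi> $ j) + (\<Sum>j\<in>UNIV. B i j * \<xi> $ j) \<le> \<alpha> i * \<xi> $ i - 1"
    and "0 < q" "q < 1" and q_margin: "\<And>i. \<alpha> i * \<xi> $ i * (1 - q) \<le> 1 / 2"
  obtains N where "razumikhin_decay x \<xi> N t0 \<tau> q (1 / 2)"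
proof -
  obtain N where "negligible N" and deriv: "\<And>t. t \<notin> N \<Longrightarrow> t0 \<le> t \<Longrightarrow>
      (x has_vector_derivative (\<chi> i. - a i i t * x t $ i + (\<Sum>j\<in>UNIV - {i}. a i j t * x t $ j)
        + (\<Sum>j\<in>UNIV. f i j t (x (h i j t) $ j)))) (at t)"
    using sol unfolding is_solution_def
    by (auto elim!: AE_E3 simp: negligible_iff_null_sets)
  have "razumikhin_decay x \<xi> N t0 \<tau> q (1 / 2)"
  proof
    show "loc_abs_continuous_from t0 x" using sol by (simp add: is_solution_def)
    have "x t = (\<chi> i. \<phi> i t)" if "t \<le> t0" for t
      using sol that by (simp add: is_solution_def vec_eq_iff)
    then have "x ` {t0 - \<tau>..t0} = (\<lambda>t. \<chi> i. \<phi> i t) ` {t0 - \<tau>..t0}"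
      by (intro image_cong) auto
    also have "bounded \<dots>"
      using continuous_on_subset[OF phi_cont, of "{t0 - \<tau>..t0}"]
      by (intro compact_imp_bounded compact_continuous_image continuous_on_vec_lambda) auto
    finally show "bounded (x ` {t0 - \<tau>..t0})" .
    fix u K i
    assume u: "t0 \<le> u" "u \<notin> N" and "0 \<le> K"
      and window: "\<And>v j. v \<in> {u - \<tau>..u} \<Longrightarrow> \<bar>x v $ j\<bar> \<le> K * \<xi> $ j"
      and large: "q * K * \<xi> $ i < \<bar>x u $ i\<bar>"
    have "((\<lambda>v. x v $ i) has_real_derivative
        - a i i u * x u $ i + (\<Sum>j\<in>UNIV - {i}. a i j u * x u $ j) + (\<Sum>j\<in>UNIV. f i j u (x (h i j u) $ j))) (at u)"
      using bounded_linear.has_vector_derivative[OF bounded_linear_vec_nth deriv[OF u(2,1)], of i]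
      by (simp add: has_real_derivative_iff_has_vector_derivative)
    moreover have "sgn (x u $ i) * (- a i i u * x u $ i + (\<Sum>j\<in>UNIV - {i}. a i j u * x u $ j)
        + (\<Sum>j\<in>UNIV. f i j u (x (h i j u) $ j))) \<le> - K / 2"
      using \<open>0 \<le> K\<close> \<open>0 < q\<close> \<open>0 < \<tau>\<close> xi_pos B_nonneg window delay[OF u(1)] a_bound[OF u(1)]
        alpha_nonneg a_diag[OF u(1)] f_bound[OF u(1)] row q_margin large
      by (intro delay_rhs_sign_bound[where a = "\<lambda>j. a i j u" and A = "A i" and B = "B i"
          and \<xi> = "\<lambda>j. \<xi> $ j" and y = "\<lambda>j. x u $ j" and z = "\<lambda>j. x (h i j u) $ j"
          and F = "\<lambda>j. f i j u (x (h i j u) $ j)" and \<alpha> = "\<alpha> i"]) (auto simp: less_imp_le)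
    ultimately show "\<exists>D. ((\<lambda>v. x v $ i) has_real_derivative D) (at u) \<and> sgn (x u $ i) * D \<le> - (1 / 2) * K"
      by auto
  qed (use \<open>negligible N\<close> \<open>0 < \<tau>\<close> \<open>0 < q\<close> \<open>q < 1\<close> xi_pos in auto)
  then show thesis by (rule that)
qed

theorem theorem2p1:
  fixes a b :: "'n::finite \<Rightarrow> 'n \<Rightarrow> real \<Rightarrow> real"
    and f :: "'n \<Rightarrow> 'n \<Rightarrow> real \<Rightarrow> real \<Rightarrow> real"
    and h :: "'n \<Rightarrow> 'n \<Rightarrow> real \<Rightarrow> real"
    and \<phi> :: "'n \<Rightarrow> real \<Rightarrow> real"
    and \<alpha> :: "'n \<Rightarrow> real"
    and \<tau> t0 :: real
    and x :: "real \<Rightarrow> real^'n"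
  assumes phi_cont: "\<And>i. continuous_on {..t0} (\<phi> i)"
    and a_meas: "\<And>i j. a i j \<in> borel_measurable lebesgue"
    and a_bdd: "\<And>i j. ess_bounded (a i j)"
    and b_meas: "\<And>i j. b i j \<in> borel_measurable lebesgue"
    and b_bdd: "\<And>i j. ess_bounded (b i j)"
    and f_cont: "\<And>i j t. continuous_on UNIV (f i j t)"
    and f_meas: "\<And>i j u. (\<lambda>t. f i j t u) \<in> borel_measurable lebesgue"
    and f_loc_bdd: "\<And>i j u. loc_ess_bounded (\<lambda>t. f i j t u)"
    and f_growth: "\<And>i j t u. t \<ge> t0 \<Longrightarrow> \<bar>f i j t u\<bar> \<le> b i j t * \<bar>u\<bar>"
    and h_meas: "\<And>i j. h i j \<in> borel_measurable lebesgue"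
    and h_le: "\<And>i j t. h i j t \<le> t"
    and A_fin: "\<And>i j. bdd_above ((\<lambda>t. \<bar>a i j t\<bar>) ` {t0..})"
    and B_fin: "\<And>i j. bdd_above ((\<lambda>t. \<bar>b i j t\<bar>) ` {t0..})"
    and alpha_pos: "\<And>i. \<alpha> i > 0"
    and tau_pos: "\<tau> > 0"
    and t0_nonneg: "t0 \<ge> 0"
    and a_diag: "\<And>i t. t \<ge> t0 \<Longrightarrow> a i i t \<ge> \<alpha> i"
    and delay_bdd: "\<And>i j t. t \<ge> t0 \<Longrightarrow> t - h i j t \<le> \<tau>"
    and M_matrix: "is_M_matrix (\<chi> i j. if i = j
                        then \<alpha> i - (SUP t\<in>{t0..}. \<bar>b i i t\<bar>)
                        else - (SUP t\<in>{t0..}. \<bar>a i j t\<bar>) - (SUP t\<in>{t0..}. \<bar>b i j t\<bar>))"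
    and sol: "is_solution a f h \<phi> t0 x"
  shows "(x \<longlongrightarrow> 0) at_top"
proof -
  define A where "A i j = (SUP t\<in>{t0..}. \<bar>a i j t\<bar>)" for i j
  define B where "B i j = (SUP t\<in>{t0..}. \<bar>b i j t\<bar>)" for i j
  have a_le_A: "\<bar>a i j t\<bar> \<le> A i j" if "t0 \<le> t" for i j t
    unfolding A_def using that A_fin by (intro cSUP_upper) auto
  have b_le_B: "\<bar>b i j t\<bar> \<le> B i j" if "t0 \<le> t" for i j t
    unfolding B_def using that B_fin by (intro cSUP_upper) auto
  have f_le_B: "\<bar>f i j t u\<bar> \<le> B i j * \<bar>u\<bar>" if "t0 \<le> t" for i j t u
    using f_growth[OF that, of i j u] mult_right_mono[OF abs_le_D1[OF b_le_B[OF that, of i j]], of "\<bar>u\<bar>"]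
    by linarith
  have delay: "t - \<tau> \<le> h i j t \<and> h i j t \<le> t" if "t0 \<le> t" for i j t
    using delay_bdd[OF that] h_le by (simp add: algebra_simps)
  obtain \<xi> where M_\<xi>: "(\<chi> i j. if i = j then \<alpha> i - B i i else - A i j - B i j) *v \<xi> = (\<chi> i. 1)"
    and \<xi>_pos: "\<And>j. 0 < \<xi> $ j"
    using is_M_matrix_positive_vector[OF M_matrix[folded A_def B_def]] by blast
  have row: "(\<Sum>j\<in>UNIV - {i}. A i j * \<xi> $ j) + (\<Sum>j\<in>UNIV. B i j * \<xi> $ j) \<le> \<alpha> i * \<xi> $ i - 1" for i
    using comparison_matrix_row[OF M_\<xi>] by simp
  have B_nonneg: "0 \<le> B i j" for i j using b_le_B[of t0 i j] by simp
  obtain q where q: "0 < q" "q < 1" "\<And>i. \<alpha> i * \<xi> $ i * (1 - q) \<le> 1 / 2"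
    using contraction_factor_exists[of "\<lambda>i. \<alpha> i * \<xi> $ i"] by blast
  obtain N where "razumikhin_decay x \<xi> N t0 \<tau> q (1 / 2)"
    by (rule delay_system_razumikhin_decay[OF sol phi_cont a_le_A a_diag less_imp_le[OF alpha_pos] f_le_B
          B_nonneg delay tau_pos \<xi>_pos row q])
  then show ?thesis by (rule razumikhin_decay.tendsto_zero)
qed

end
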